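(* Let $\varphi\in C(\overline{\mathbb D})$ satisfy $\operatorname{Re}\varphi(z)\ge|\operatorname{Im}\varphi(z)|^2$ for all $z\in\mathbb D$. Then $B(\varphi)$ extends continuously to $\overline{\mathbb D}$; if there is $\delta>0$ such that $|B(\varphi)(z)|\ge\delta$ for all $z\in\partial\mathbb D$ (for this continuous extension), then $B(\varphi)$ is invertible as an element of $L^\infty(\mathbb D)$, i.e. $\inf_{z\in\mathbb D}|B(\varphi)(z)|>0$.
   Context: $\mathbb D$ is the open unit disc, $dA$ normalized area measure, $k_z(w)=\frac{1-|z|^2}{(1-w\bar z)^2}$, and $B(g)(z)=\int_{\mathbb D}|k_z(w)|^2g(w)\,dA(w)$ is the Berezin transform. *)

theory Defs
  imports "HOL-Analysis.Analysis"
begin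

definition bergman_k :: "complex \<Rightarrow> complex \<Rightarrow> complex" where
  "bergman_k z w = complex_of_real (1 - (cmod z)^2) / (1 - w * cnj z)^2"

text \<open>Berezin transform with respect to normalized area measure dA = (1/pi) dx dy on the unit disc.\<close>
definition berezin :: "(complex \<Rightarrow> complex) \<Rightarrow> complex \<Rightarrow> complex" where
  "berezin g z = integral (ball 0 1)
      (\<lambda>w. complex_of_real ((cmod (bergman_k z w))^2 / pi) * g w)"

end

theory Submission imports Defs "HOL-Complex_Analysis.Riemann_Mapping" begin

text \<open>
  Write \<open>B(\<phi>)(z) = \<integral> K\<^sub>z \<phi>\<close> with the nonnegative kernel \<open>K\<^sub>z = |k\<^sub>z|\<^sup>2/\<pi>\<close>. Up to a unimodular
  factor, \<open>k\<^sub>z\<close> is the derivative of the disc automorphism \<open>w \<mapsto> (w - z)/(1 - z\<^sup>* w)\<close>, so the area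
  formula for injective holomorphic maps gives \<open>\<integral> K\<^sub>z = 1\<close>. Away from a boundary point \<open>\<zeta>\<close> the
  kernel is \<open>O(|z - \<zeta>|\<^sup>2)\<close>, so \<open>K\<^sub>z\<close> is an approximate identity and \<open>B(\<phi>)\<close> extends
  continuously to the closed disc by \<open>\<phi>\<close> on the circle.

  The hypothesis \<open>Re \<phi> \<ge> |Im \<phi>|\<^sup>2\<close> makes \<open>Re \<phi> \<ge> 0\<close>, with equality only at zeros of \<open>\<phi>\<close>.
  Hence \<open>Re B(\<phi>) > 0\<close> on the disc unless \<open>\<phi>\<close> vanishes identically, which is excluded once the
  extension is bounded away from zero on the circle. The extension then has no zeros on the
  compact closed disc, so it is bounded away from zero there.
\<close>


text \<open>The change of variables theorem of HOL-Analysis lives in \<open>real^'n\<close>; we transport it to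
  \<open>complex\<close> along the identification \<open>\<complex> = \<real>\<^sup>2\<close>.\<close>

definition complex_of_vec :: "real^2 \<Rightarrow> complex" where
  "complex_of_vec v = Complex (v$1) (v$2)"

definition vec_of_complex :: "complex \<Rightarrow> real^2" where
  "vec_of_complex z = (\<chi> i. if i = 1 then Re z else Im z)"

lemma complex_of_vec_of_complex [simp]: "complex_of_vec (vec_of_complex z) = z"
  by (simp add: complex_of_vec_def vec_of_complex_def complex_eq_iff)

lemma vec_of_complex_of_vec [simp]: "vec_of_complex (complex_of_vec v) = v"
  by (simp add: complex_of_vec_def vec_of_complex_def vec_eq_iff forall_2)

lemma vec_of_complex_eq_iff [simp]: "vec_of_complex z = vec_of_complex w \<longleftrightarrow> z = w"
  by (metis complex_of_vec_of_complex)

lemma bounded_linear_complex_of_vec: "bounded_linear complex_of_vec"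
  by (simp flip: linear_conv_bounded_linear) (rule linearI; simp add: complex_of_vec_def complex_eq_iff)

lemma bounded_linear_vec_of_complex: "bounded_linear vec_of_complex"
  by (simp flip: linear_conv_bounded_linear) (rule linearI; simp add: vec_of_complex_def vec_eq_iff)

lemma norm_complex_of_vec [simp]: "norm (complex_of_vec v) = norm v"
  by (simp add: complex_of_vec_def norm_vec_def L2_set_def sum_2 cmod_def)

lemma norm_vec_of_complex [simp]: "norm (vec_of_complex z) = norm z"
  by (metis complex_of_vec_of_complex norm_complex_of_vec)

lemma image_eq_vimage_inverse:
  assumes "\<And>x. h (g x) = x" "\<And>y. g (h y) = y"
  shows "h ` S = g -` S"
proof
  show "h ` S \<subseteq> g -` S"
    using assms(2) by auto
  show "g -` S \<subseteq> h ` S"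
  proof
    fix x assume "x \<in> g -` S"
    then show "x \<in> h ` S"
      using assms(1)[of x] by (metis image_eqI vimageE)
  qed
qed

lemma image_complex_of_vec: "complex_of_vec ` S = vec_of_complex -` S"
  by (rule image_eq_vimage_inverse) simp_all

lemma image_vec_of_complex: "vec_of_complex ` S = complex_of_vec -` S"
  by (rule image_eq_vimage_inverse) simp_all

lemma complex_of_vec_cbox: "complex_of_vec ` cbox u v = cbox (complex_of_vec u) (complex_of_vec v)"
  unfolding image_complex_of_vec by (auto simp: mem_box_cart cbox_complex_eq forall_2
      complex_of_vec_def vec_of_complex_def)

lemma vec_of_complex_cbox: "vec_of_complex ` cbox u v = cbox (vec_of_complex u) (vec_of_complex v)"
  unfolding image_vec_of_complex by (auto simp: mem_box_cart cbox_complex_eq forall_2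
      complex_of_vec_def vec_of_complex_def)

lemma content_cbox_complex_of_vec:
  "measure lborel (cbox (complex_of_vec u) (complex_of_vec v)) = measure lborel (cbox u v)"
proof -
  have "cbox u v = {} \<longleftrightarrow> v$1 < u$1 \<or> v$2 < u$2"
  proof -
    have "(\<exists>i::2. P i) \<longleftrightarrow> P 1 \<or> P 2" for P
      by (metis exhaust_2)
    then show ?thesis
      unfolding interval_eq_empty_cart .
  qed
  moreover have "cbox (complex_of_vec u) (complex_of_vec v) = {} \<longleftrightarrow> v$1 < u$1 \<or> v$2 < u$2"
    by (simp add: box_eq_empty(2) Basis_complex_def complex_of_vec_def)
  ultimately show ?thesis
    by (subst content_cbox_if, subst content_cbox_if_cart) (simp add: Basis_complex_def complex_of_vec_def UNIV_2)
qed

lemma content_cbox_vec_of_complex: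
  "measure lborel (cbox (vec_of_complex u) (vec_of_complex v)) = measure lborel (cbox u v)"
  by (metis complex_of_vec_of_complex content_cbox_complex_of_vec)

lemma has_integral_twiddle_isometry:
  fixes f :: "'a::euclidean_space \<Rightarrow> 'c::banach" and g :: "'b::euclidean_space \<Rightarrow> 'a"
  assumes f: "(f has_integral i) S"
    and hg: "\<And>x. h (g x) = x" and gh: "\<And>x. g (h x) = x"
    and cg: "\<And>x. continuous (at x) g"
    and gbox: "\<And>u v. \<exists>w z. g ` cbox u v = cbox w z"
    and hbox: "\<And>u v. \<exists>w z. h ` cbox u v = cbox w z"
    and content: "\<And>u v. measure lborel (g ` cbox u v) = measure lborel (cbox u v)"
    and nh: "\<And>x. norm (h x) = norm x"
  shows "((\<lambda>x. f (g x)) has_integral i) (h ` S)"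
proof (rule has_integral'[THEN iffD2], intro allI impI)
  fix e :: real assume e: "e > 0"
  obtain B where B: "B > 0"
    and HB: "\<forall>a b. ball 0 B \<subseteq> cbox a b \<longrightarrow>
      (\<exists>z. ((\<lambda>x. if x \<in> S then f x else 0) has_integral z) (cbox a b) \<and> norm (z - i) < e)"
    using f[THEN has_integral'[THEN iffD1], rule_format, OF e] by (elim exE conjE)
  show "\<exists>B>0. \<forall>a b. ball 0 B \<subseteq> cbox a b \<longrightarrow>
      (\<exists>z. ((\<lambda>x. if x \<in> h ` S then f (g x) else 0) has_integral z) (cbox a b) \<and> norm (z - i) < e)"
  proof (intro exI[of _ B] conjI allI impI B)
    fix a b :: 'b assume ab: "ball 0 B \<subseteq> cbox a b"
    obtain w z' where gb: "g ` cbox a b = cbox w z'" using gbox[of a b] by (elim exE)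
    have "ball 0 B \<subseteq> cbox w z'"
    proof
      fix x :: 'a assume "x \<in> ball 0 B"
      then have "h x \<in> ball 0 B" by (simp add: nh)
      then have "h x \<in> cbox a b" using ab by (rule subsetD[rotated])
      then have "g (h x) \<in> g ` cbox a b" by (rule imageI)
      then show "x \<in> cbox w z'" unfolding gh gb .
    qed
    then have "\<exists>z. ((\<lambda>x. if x \<in> S then f x else 0) has_integral z) (cbox w z') \<and> norm (z - i) < e"
      using HB by (elim allE impE)
    then obtain z where z: "((\<lambda>x. if x \<in> S then f x else 0) has_integral z) (cbox w z')"
      and nz: "norm (z - i) < e" by (elim exE conjE)
    have "((\<lambda>x. (\<lambda>x. if x \<in> S then f x else 0) (g x)) has_integral (1/1) *\<^sub>R z) (h ` cbox w z')"
      by (rule has_integral_twiddle[OF _ hg gh cg gbox hbox _ z]) (simp_all add: content)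
    moreover have "h ` cbox w z' = cbox a b"
      unfolding gb[symmetric] image_image hg by simp
    moreover have "h ` S = g -` S"
      using hg gh by (rule image_eq_vimage_inverse)
    ultimately have "((\<lambda>x. if x \<in> h ` S then f (g x) else 0) has_integral z) (cbox a b)"
      by simp
    then show "\<exists>z. ((\<lambda>x. if x \<in> h ` S then f (g x) else 0) has_integral z) (cbox a b) \<and> norm (z - i) < e"
      using nz by (intro exI[of _ z] conjI)
  qed
qed

lemma has_integral_vec_of_complex_iff:
  fixes f :: "complex \<Rightarrow> 'c::banach"
  shows "((\<lambda>x. f (complex_of_vec x)) has_integral i) (vec_of_complex ` S) \<longleftrightarrow> (f has_integral i) S"
proof
  assume "((\<lambda>x. f (complex_of_vec x)) has_integral i) (vec_of_complex ` S)"
  then have "((\<lambda>z. f (complex_of_vec (vec_of_complex z))) has_integral i)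
      (complex_of_vec ` vec_of_complex ` S)"
    by (rule has_integral_twiddle_isometry[where g = vec_of_complex and h = complex_of_vec])
      (auto simp: bounded_linear_vec_of_complex linear_continuous_at vec_of_complex_cbox complex_of_vec_cbox
         content_cbox_vec_of_complex)
  then show "(f has_integral i) S"
    by (simp add: image_image)
next
  assume "(f has_integral i) S"
  then show "((\<lambda>x. f (complex_of_vec x)) has_integral i) (vec_of_complex ` S)"
    by (rule has_integral_twiddle_isometry[where g = complex_of_vec and h = vec_of_complex])
      (auto simp: bounded_linear_complex_of_vec linear_continuous_at complex_of_vec_cbox vec_of_complex_cbox
         content_cbox_complex_of_vec)
qed

lemma det_matrix_complex_mult: "det (matrix (\<lambda>h. vec_of_complex (d * complex_of_vec h))) = (cmod d)^2"
  by (simp add: det_2 matrix_def complex_of_vec_def vec_of_complex_def axis_def cmod_power2;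
      simp add: power2_eq_square)

lemma has_integral_abs_det_jacobian:
  fixes g :: "real^'n::{finite,wellorder} \<Rightarrow> real^'n::{finite,wellorder}"
  assumes S: "S \<in> sets lebesgue"
    and der: "\<And>x. x \<in> S \<Longrightarrow> (g has_derivative g' x) (at x within S)"
    and inj: "inj_on g S"
    and image: "((\<lambda>x. 1::real) has_integral m) (g ` S)"
  shows "((\<lambda>x. \<bar>det (matrix (g' x))\<bar>) has_integral m) S"
proof -
  have "(\<lambda>x. vec 1 :: real^1) absolutely_integrable_on (g ` S)"
    unfolding absolutely_integrable_on_1_iff
    by (rule nonnegative_absolutely_integrable_1) (use image has_integral_integrable in auto)
  moreover have "integral (g ` S) (\<lambda>x. vec 1 :: real^1) = vec m"
    using has_integral_scaleR_left[OF image, of "vec 1 :: real^1"]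
    by (simp add: integral_unique vec_eq_iff)
  moreover have "(\<lambda>x. \<bar>det (matrix (g' x))\<bar> *\<^sub>R (vec 1 :: real^1)) absolutely_integrable_on S \<and>
      integral S (\<lambda>x. \<bar>det (matrix (g' x))\<bar> *\<^sub>R (vec 1 :: real^1)) = vec m
    \<longleftrightarrow> (\<lambda>x. vec 1 :: real^1) absolutely_integrable_on (g ` S) \<and>
      integral (g ` S) (\<lambda>x. vec 1 :: real^1) = vec m"
    by (rule has_absolute_integral_change_of_variables[OF S _ inj]) (erule der)
  ultimately have "(\<lambda>x. \<bar>det (matrix (g' x))\<bar> *\<^sub>R (vec 1 :: real^1)) absolutely_integrable_on S \<and>
      integral S (\<lambda>x. \<bar>det (matrix (g' x))\<bar> *\<^sub>R (vec 1 :: real^1)) = vec m"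
    by blast
  then have "((\<lambda>x. \<bar>det (matrix (g' x))\<bar> *\<^sub>R (vec 1 :: real^1)) has_integral vec m) S"
    using integrable_integral absolutely_integrable_on_def by metis
  from has_integral_linear[OF this bounded_linear_vec_nth[of 1]]
  show ?thesis
    by (simp add: o_def)
qed

lemma has_integral_sq_norm_deriv_injective:
  fixes f f' :: "complex \<Rightarrow> complex"
  assumes S: "open S" and inj: "inj_on f S"
    and der: "\<And>z. z \<in> S \<Longrightarrow> (f has_field_derivative f' z) (at z)"
    and area: "((\<lambda>z. 1::real) has_integral m) (f ` S)"
  shows "((\<lambda>z. (cmod (f' z))^2) has_integral m) S"
proof -
  define T where "T = vec_of_complex ` S"
  define g where "g x = vec_of_complex (f (complex_of_vec x))" for x
  define g' where "g' x h = vec_of_complex (f' (complex_of_vec x) * complex_of_vec h)" for x h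
  have "open T"
    unfolding T_def image_vec_of_complex
    by (rule continuous_open_vimage[OF S])
      (simp add: bounded_linear_complex_of_vec linear_continuous_at)
  then have "T \<in> sets lebesgue"
    by (metis borel_open sets_completionI_sets sets_lborel)
  moreover have "(g has_derivative g' x) (at x within T)" if "x \<in> T" for x
  proof -
    have "(f has_derivative (*) (f' (complex_of_vec x))) (at (complex_of_vec x))"
      using der that by (auto simp: T_def has_field_derivative_def)
    then have "((vec_of_complex \<circ> f \<circ> complex_of_vec) has_derivative
        (vec_of_complex \<circ> (*) (f' (complex_of_vec x)) \<circ> complex_of_vec)) (at x)"
      by (intro diff_chain_at bounded_linear_imp_has_derivative bounded_linear_complex_of_vec
          bounded_linear_vec_of_complex)
    then show ?thesis
      unfolding g_def[abs_def] g'_def[abs_def] o_def by (rule has_derivative_at_withinI)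
  qed
  moreover have "inj_on g T"
    using inj by (auto simp: inj_on_def g_def T_def)
  moreover have "g ` T = vec_of_complex ` f ` S"
    by (auto simp: g_def T_def image_image)
  then have "((\<lambda>x. 1::real) has_integral m) (g ` T)"
    using area has_integral_vec_of_complex_iff[where f = "\<lambda>z. 1::real"] by simp
  ultimately have "((\<lambda>x. \<bar>det (matrix (g' x))\<bar>) has_integral m) T"
    by (rule has_integral_abs_det_jacobian)
  then have "((\<lambda>x. (cmod (f' (complex_of_vec x)))^2) has_integral m) T"
    unfolding g'_def[abs_def] det_matrix_complex_mult by simp
  then show ?thesis
    unfolding T_def has_integral_vec_of_complex_iff[where f = "\<lambda>z. (cmod (f' z))^2"] .
qed

lemma has_integral_const_unit_disc: "((\<lambda>w. c) has_integral c * pi) (ball (0::complex) 1)"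
proof -
  have "((\<lambda>w. 1::real) has_integral pi) (ball (0::complex) 1)"
    using has_integral_measure_lborel[of "ball (0::complex) 1"] emeasure_bounded_finite[of "ball 0 1"]
    by (simp add: content_ball unit_ball_vol_2)
  from has_integral_mult_right[OF this, of c] show ?thesis
    by (simp add: mult.commute)
qed

lemma bergman_denominator_nonzero:
  assumes "norm z < 1" "norm w \<le> 1"
  shows "1 - w * cnj z \<noteq> 0"
proof
  assume "1 - w * cnj z = 0"
  then have "norm w * norm z = 1"
    by (metis complex_mod_cnj norm_mult norm_one right_minus_eq)
  moreover have "norm w * norm z \<le> norm z"
    using assms(2) by (simp add: mult_left_le_one_le)
  ultimately show False
    using assms(1) by simp
qed

lemma Moebius_function_has_field_derivative:
  assumes "norm z < 1" "norm w < 1"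
  shows "(Moebius_function 0 z has_field_derivative
           complex_of_real (1 - (cmod z)^2) / (1 - cnj z * w)^2) (at w)"
proof -
  have "1 - cnj z * w \<noteq> 0"
    using bergman_denominator_nonzero[of z w] assms by (simp add: mult.commute)
  moreover have "cnj z * z = complex_of_real ((cmod z)^2)"
    by (metis complex_norm_square mult.commute)
  ultimately show ?thesis
    unfolding Moebius_function_simple[abs_def]
    by (auto intro!: derivative_eq_intros simp: field_simps power2_eq_square)
qed

lemma Moebius_function_image_unit_disc:
  assumes "norm z < 1"
  shows "Moebius_function 0 z ` ball 0 1 = ball 0 1"
proof
  show "Moebius_function 0 z ` ball 0 1 \<subseteq> ball 0 1"
    using assms Moebius_function_norm_lt_1 by auto
  show "ball 0 1 \<subseteq> Moebius_function 0 z ` ball 0 1"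
  proof
    fix w :: complex assume "w \<in> ball 0 1"
    then have "Moebius_function 0 z (Moebius_function 0 (-z) w) = w"
      and "Moebius_function 0 (-z) w \<in> ball 0 1"
      using assms Moebius_function_compose[of z "-z" w] Moebius_function_norm_lt_1[of "-z" w 0]
      by auto
    then show "w \<in> Moebius_function 0 z ` ball 0 1"
      by (metis image_eqI)
  qed
qed

lemma has_integral_sq_norm_bergman_k:
  assumes "norm z < 1"
  shows "((\<lambda>w. (cmod (bergman_k z w))^2) has_integral pi) (ball 0 1)"
proof -
  have "inj_on (Moebius_function 0 z) (ball 0 1)"
    by (rule inj_on_inverseI[where g = "Moebius_function 0 (-z)"])
      (use assms Moebius_function_compose[of "-z" z] in auto)
  moreover have "(Moebius_function 0 z has_field_derivative
      complex_of_real (1 - (cmod z)^2) / (1 - cnj z * w)^2) (at w)" if "w \<in> ball 0 1" for w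
    using Moebius_function_has_field_derivative assms that by simp
  moreover have "((\<lambda>w. 1::real) has_integral pi) (Moebius_function 0 z ` ball 0 1)"
    using has_integral_const_unit_disc[of 1] assms by (simp add: Moebius_function_image_unit_disc)
  ultimately have "((\<lambda>w. (cmod (complex_of_real (1 - (cmod z)^2) / (1 - cnj z * w)^2))^2)
      has_integral pi) (ball 0 1)"
    by (rule has_integral_sq_norm_deriv_injective[OF open_ball])
  then show ?thesis
    by (simp add: bergman_k_def mult.commute)
qed

definition berezin_kernel :: "complex \<Rightarrow> complex \<Rightarrow> real" where
  "berezin_kernel z w = (cmod (bergman_k z w))^2 / pi"

lemma berezin_eq_integral_kernel:
  "berezin g z = integral (ball 0 1) (\<lambda>w. complex_of_real (berezin_kernel z w) * g w)"
  unfolding berezin_def berezin_kernel_def ..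

lemma berezin_kernel_nonneg: "berezin_kernel z w \<ge> 0"
  unfolding berezin_kernel_def by simp

lemma has_integral_berezin_kernel:
  assumes "norm z < 1"
  shows "(berezin_kernel z has_integral 1) (ball 0 1)"
  using has_integral_mult_left[OF has_integral_sq_norm_bergman_k[OF assms], of "1/pi"]
  by (simp add: berezin_kernel_def[abs_def])

lemma continuous_on_berezin_kernel:
  "continuous_on (ball 0 1 \<times> cball 0 1) (case_prod berezin_kernel)"
proof -
  have "(1 - w * cnj z)^2 \<noteq> 0" if "(z, w) \<in> ball 0 1 \<times> cball 0 1" for z w
    using bergman_denominator_nonzero that by auto
  then show ?thesis
    unfolding berezin_kernel_def bergman_k_def case_prod_beta
    by (intro continuous_intros) auto
qed

lemma norm_bergman_k:
  assumes "norm z < 1"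
  shows "cmod (bergman_k z w) = (1 - (cmod z)^2) / (cmod (1 - w * cnj z))^2"
proof -
  have "1 - (cmod z)^2 \<ge> 0"
    using assms by (simp add: abs_square_le_1 less_imp_le)
  then show ?thesis
    unfolding bergman_k_def norm_divide norm_power norm_of_real by simp
qed

lemma berezin_kernel_lower_bound:
  assumes z: "norm z < 1" and w: "norm w \<le> 1"
  shows "(1 - (cmod z)^2)^2 / (16 * pi) \<le> berezin_kernel z w"
proof -
  have "cmod (1 - w * cnj z) \<le> 1 + cmod w * cmod z"
    by (metis complex_mod_cnj norm_mult norm_one norm_triangle_ineq4)
  also have "\<dots> \<le> 2"
    using z w by (smt (verit) mult_le_one norm_ge_zero)
  finally have "(cmod (1 - w * cnj z))^2 \<le> 2^2"
    by (intro power_mono) auto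
  moreover have "cmod (1 - w * cnj z) > 0"
    using bergman_denominator_nonzero[OF z w] by simp
  moreover have "1 - (cmod z)^2 \<ge> 0"
    using z by (simp add: abs_square_le_1 less_imp_le)
  ultimately have "(1 - (cmod z)^2) / 4 \<le> cmod (bergman_k z w)"
    unfolding norm_bergman_k[OF z] by (intro divide_left_mono) auto
  then have "((1 - (cmod z)^2) / 4)^2 \<le> (cmod (bergman_k z w))^2"
    using \<open>1 - (cmod z)^2 \<ge> 0\<close> by (intro power_mono) auto
  then have "(1 - (cmod z)^2)^2 / 16 / pi \<le> (cmod (bergman_k z w))^2 / pi"
    by (intro divide_right_mono) (simp_all add: power_divide)
  then show ?thesis
    unfolding berezin_kernel_def by (simp add: mult.commute)
qed

lemma berezin_kernel_upper_bound:
  assumes z: "norm z < 1" and t: "t > 0" "t \<le> cmod (1 - w * cnj z)"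
  shows "berezin_kernel z w \<le> (1 - (cmod z)^2)^2 / (pi * t^4)"
proof -
  have "1 - (cmod z)^2 \<ge> 0"
    using z by (simp add: abs_square_le_1 less_imp_le)
  then have "cmod (bergman_k z w) \<le> (1 - (cmod z)^2) / t^2"
    unfolding norm_bergman_k[OF z] using t by (intro divide_left_mono power_mono mult_pos_pos) auto
  then have "(cmod (bergman_k z w))^2 \<le> ((1 - (cmod z)^2) / t^2)^2"
    by (intro power_mono) auto
  then show ?thesis
    unfolding berezin_kernel_def by (simp add: divide_right_mono field_simps)
qed

lemma continuous_on_compact_bound_pos:
  fixes f :: "'a::topological_space \<Rightarrow> 'b::real_normed_vector"
  assumes "compact A" "continuous_on A f"
  obtains B where "B > 0" "\<And>x. x \<in> A \<Longrightarrow> norm (f x) \<le> B"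
proof -
  obtain B where "B \<ge> 0" "\<And>x. x \<in> A \<Longrightarrow> norm (f x) \<le> B"
    using continuous_on_compact_bound[OF assms] by blast
  then show ?thesis
    using that[of "B + 1"] by fastforce
qed

lemma has_integral_berezin:
  assumes z: "norm z < 1" and \<phi>: "continuous_on (cball 0 1) \<phi>"
  shows "((\<lambda>w. complex_of_real (berezin_kernel z w) * \<phi> w) has_integral berezin \<phi> z) (ball 0 1)"
proof -
  obtain M where M: "\<And>w. w \<in> cball 0 1 \<Longrightarrow> norm (\<phi> w) \<le> M"
    using continuous_on_compact_bound_pos[OF compact_cball \<phi>] by blast
  have "continuous_on (cball 0 1) (berezin_kernel z)"
    by (rule continuous_on_compose2[OF continuous_on_berezin_kernel, of _ "Pair z", simplified])
      (use z in \<open>auto simp: continuous_on_Pair\<close>)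
  then have "continuous_on (ball 0 1) (\<lambda>w. complex_of_real (berezin_kernel z w) * \<phi> w)"
    by (intro continuous_intros continuous_on_subset[OF \<phi>]) (auto elim: continuous_on_subset)
  then have "(\<lambda>w. complex_of_real (berezin_kernel z w) * \<phi> w) \<in>
      borel_measurable (lebesgue_on (ball 0 1))"
    by (rule continuous_imp_measurable_on_sets_lebesgue) simp
  moreover have "(\<lambda>w. berezin_kernel z w * M) integrable_on ball 0 1"
    using has_integral_mult_left[OF has_integral_berezin_kernel[OF z]] by blast
  moreover have "norm (complex_of_real (berezin_kernel z w) * \<phi> w) \<le> berezin_kernel z w * M"
    if "w \<in> ball 0 1" for w
    using M[of w] that berezin_kernel_nonneg[of z w] by (simp add: norm_mult mult_left_mono)
  ultimately have "(\<lambda>w. complex_of_real (berezin_kernel z w) * \<phi> w) integrable_on ball 0 1"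
    by (rule measurable_bounded_by_integrable_imp_integrable)
      simp_all
  then show ?thesis
    unfolding berezin_eq_integral_kernel by (rule integrable_integral)
qed

lemma berezin_kernel_uniformly_close:
  assumes z0: "z0 \<in> ball 0 1" and "\<eta> > 0"
  obtains d where "d > 0" and "\<And>z w. z \<in> ball 0 1 \<Longrightarrow> dist z z0 < d \<Longrightarrow> w \<in> cball 0 1 \<Longrightarrow>
      \<bar>berezin_kernel z w - berezin_kernel z0 w\<bar> < \<eta>"
proof -
  define r where "r = (1 - norm z0) / 2"
  have "r > 0"
    using z0 by (simp add: r_def)
  define C where "C = cball z0 r \<times> cball (0::complex) 1"
  have "cball z0 r \<subseteq> ball 0 1"
    using z0 by (simp add: cball_subset_ball_iff r_def field_simps)
  then have "C \<subseteq> ball 0 1 \<times> cball 0 1"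
    by (auto simp: C_def)
  then have "uniformly_continuous_on C (case_prod berezin_kernel)"
    by (intro compact_uniformly_continuous continuous_on_subset[OF continuous_on_berezin_kernel])
      (simp_all add: C_def compact_Times)
  then obtain d where "d > 0" and d: "\<And>p q. p \<in> C \<Longrightarrow> q \<in> C \<Longrightarrow> dist q p < d \<Longrightarrow>
      dist (case_prod berezin_kernel q) (case_prod berezin_kernel p) < \<eta>"
    using \<open>\<eta> > 0\<close> unfolding uniformly_continuous_on_def by metis
  have "\<bar>berezin_kernel z w - berezin_kernel z0 w\<bar> < \<eta>"
    if "dist z z0 < min d r" "w \<in> cball 0 1" for z w
    using d[of "(z0, w)" "(z, w)"] that \<open>r > 0\<close>
    by (simp add: C_def dist_Pair_Pair dist_real_def dist_commute)
  then show ?thesis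
    using that[of "min d r"] \<open>d > 0\<close> \<open>r > 0\<close> by simp
qed

lemma continuous_on_berezin:
  assumes \<phi>: "continuous_on (cball 0 1) \<phi>"
  shows "continuous_on (ball 0 1) (berezin \<phi>)"
  unfolding continuous_on_iff
proof (intro ballI allI impI)
  fix z0 :: complex and e :: real
  assume z0: "z0 \<in> ball 0 1" and "e > 0"
  obtain M where "M > 0" and M: "\<And>w. w \<in> cball 0 1 \<Longrightarrow> norm (\<phi> w) \<le> M"
    using continuous_on_compact_bound_pos[OF compact_cball \<phi>] by blast
  define \<eta> where "\<eta> = e / (2 * M * pi)"
  have "\<eta> > 0"
    using \<open>e > 0\<close> \<open>M > 0\<close> by (simp add: \<eta>_def)
  then obtain d where "d > 0" and d: "\<And>z w. z \<in> ball 0 1 \<Longrightarrow> dist z z0 < d \<Longrightarrow> w \<in> cball 0 1 \<Longrightarrow>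
      \<bar>berezin_kernel z w - berezin_kernel z0 w\<bar> < \<eta>"
    using berezin_kernel_uniformly_close[OF z0] by blast
  have "dist (berezin \<phi> z) (berezin \<phi> z0) < e" if z: "z \<in> ball 0 1" "dist z z0 < d" for z
  proof -
    have diff: "((\<lambda>w. complex_of_real (berezin_kernel z w) * \<phi> w
        - complex_of_real (berezin_kernel z0 w) * \<phi> w) has_integral berezin \<phi> z - berezin \<phi> z0)
        (ball 0 1)"
      using z z0 by (intro has_integral_diff has_integral_berezin \<phi>) auto
    have "norm (complex_of_real (berezin_kernel z w) * \<phi> w
        - complex_of_real (berezin_kernel z0 w) * \<phi> w) \<le> \<eta> * M" if "w \<in> ball 0 1" for w
      using d[OF z, of w] M[of w] that
      by (simp add: norm_mult mult_mono less_imp_le flip: left_diff_distrib of_real_diff)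
    then have "norm (berezin \<phi> z - berezin \<phi> z0) \<le> \<eta> * M * pi"
      using integral_norm_bound_integral[OF has_integral_integrable[OF diff]
          has_integral_integrable[OF has_integral_const_unit_disc]]
      by (simp add: integral_unique[OF diff] integral_unique[OF has_integral_const_unit_disc])
    also have "\<dots> < e"
      using \<open>e > 0\<close> \<open>M > 0\<close> by (simp add: \<eta>_def)
    finally show ?thesis
      by (simp add: dist_norm)
  qed
  with \<open>d > 0\<close> show "\<exists>d>0. \<forall>z\<in>ball 0 1. dist z z0 < d \<longrightarrow> dist (berezin \<phi> z) (berezin \<phi> z0) < e"
    by blast
qed

lemma norm_berezin_diff_le:
  assumes z: "norm z < 1" and \<phi>: "continuous_on (cball 0 1) \<phi>"
    and bound: "\<And>w. w \<in> ball 0 1 \<Longrightarrow> berezin_kernel z w * norm (\<phi> w - c) \<le> berezin_kernel z w * a + b"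
  shows "norm (berezin \<phi> z - c) \<le> a + b * pi"
proof -
  have "((\<lambda>w. complex_of_real (berezin_kernel z w) * c) has_integral 1 * c) (ball 0 1)"
    using has_integral_mult_left[OF has_integral_of_real[OF has_integral_berezin_kernel[OF z]]] by simp
  then have diff: "((\<lambda>w. complex_of_real (berezin_kernel z w) * (\<phi> w - c)) has_integral
      berezin \<phi> z - c) (ball 0 1)"
    using has_integral_diff[OF has_integral_berezin[OF z \<phi>]] by (simp add: right_diff_distrib)
  have bound_integral: "((\<lambda>w. berezin_kernel z w * a + b) has_integral 1 * a + b * pi) (ball 0 1)"
    by (intro has_integral_add has_integral_mult_left has_integral_berezin_kernel z
        has_integral_const_unit_disc)
  have "norm (complex_of_real (berezin_kernel z w) * (\<phi> w - c)) \<le> berezin_kernel z w * a + b"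
    if "w \<in> ball 0 1" for w
    using bound[OF that] berezin_kernel_nonneg[of z w] by (simp add: norm_mult)
  from integral_norm_bound_integral[OF has_integral_integrable[OF diff]
      has_integral_integrable[OF bound_integral] this]
  show ?thesis
    by (simp add: integral_unique[OF diff] integral_unique[OF bound_integral])
qed

lemma one_minus_sq_norm_le_dist_sphere:
  fixes z \<zeta> :: "'a::real_normed_vector"
  assumes "norm z \<le> 1" "norm \<zeta> = 1"
  shows "1 - (norm z)^2 \<le> 2 * dist z \<zeta>"
proof -
  have "1 - (norm z)^2 = (1 - norm z) * (1 + norm z)"
    by (simp add: power2_eq_square algebra_simps)
  also have "\<dots> \<le> (1 - norm z) * 2"
    using assms by (intro mult_left_mono) auto
  also have "\<dots> \<le> 2 * dist z \<zeta>"
    using norm_triangle_ineq2[of \<zeta> z] assms by (simp add: dist_norm norm_minus_commute)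
  finally show ?thesis .
qed

lemma bergman_denominator_lower_bound:
  assumes \<zeta>: "norm \<zeta> = 1" and w: "norm w \<le> 1"
  shows "dist w \<zeta> - dist z \<zeta> \<le> cmod (1 - w * cnj z)"
proof -
  have "cnj \<zeta> * \<zeta> = 1"
    using \<zeta> by (metis complex_norm_square mult.commute of_real_1 power_one)
  then have "1 - w * cnj z = cnj \<zeta> * (\<zeta> - w) + w * (cnj \<zeta> - cnj z)"
    by (simp add: algebra_simps)
  then have "cmod (cnj \<zeta> * (\<zeta> - w)) - cmod (w * (cnj \<zeta> - cnj z)) \<le> cmod (1 - w * cnj z)"
    by (metis norm_diff_ineq)
  moreover have "cmod (cnj \<zeta> * (\<zeta> - w)) = dist w \<zeta>"
    using \<zeta> by (simp add: norm_mult dist_norm norm_minus_commute)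
  moreover have "cmod (w * (cnj \<zeta> - cnj z)) \<le> dist z \<zeta>"
    using w by (simp add: norm_mult dist_norm norm_minus_commute mult_left_le_one_le
        flip: complex_cnj_diff)
  ultimately show ?thesis
    by linarith
qed

lemma berezin_kernel_bound_away:
  assumes z: "norm z < 1" and \<zeta>: "norm \<zeta> = 1" and w: "norm w \<le> 1"
    and \<eta>: "\<eta> > 0" "\<eta> \<le> dist w \<zeta>" "2 * dist z \<zeta> \<le> \<eta>"
  shows "berezin_kernel z w \<le> 64 * (dist z \<zeta>)^2 / (pi * \<eta>^4)"
proof -
  have "\<eta> / 2 \<le> cmod (1 - w * cnj z)"
    using bergman_denominator_lower_bound[OF \<zeta> w, of z] \<eta> by linarith
  then have "berezin_kernel z w \<le> (1 - (cmod z)^2)^2 / (pi * (\<eta>/2)^4)"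
    using \<eta> by (intro berezin_kernel_upper_bound[OF z]) auto
  also have "\<dots> \<le> (2 * dist z \<zeta>)^2 / (pi * (\<eta>/2)^4)"
    using z one_minus_sq_norm_le_dist_sphere[OF _ \<zeta>, of z] \<eta>
    by (intro divide_right_mono power_mono) (auto simp: abs_square_le_1)
  also have "\<dots> = 64 * (dist z \<zeta>)^2 / (pi * \<eta>^4)"
    by (simp add: field_simps)
  finally show ?thesis .
qed

text \<open>Near \<open>\<zeta>\<close> the integrand is controlled by the oscillation of \<open>\<phi>\<close>, away from \<open>\<zeta>\<close>
  by the decay of the kernel.\<close>

lemma norm_berezin_sub_boundary_le:
  assumes z: "z \<in> ball 0 1" and \<zeta>: "norm \<zeta> = 1" and \<phi>: "continuous_on (cball 0 1) \<phi>"
    and M: "\<And>w. w \<in> cball 0 1 \<Longrightarrow> norm (\<phi> w) \<le> M"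
    and \<eta>: "\<eta> > 0" "2 * dist z \<zeta> \<le> \<eta>"
    and "\<epsilon> \<ge> 0" and osc: "\<And>w. w \<in> ball 0 1 \<Longrightarrow> dist w \<zeta> < \<eta> \<Longrightarrow> norm (\<phi> w - \<phi> \<zeta>) \<le> \<epsilon>"
  shows "norm (berezin \<phi> z - \<phi> \<zeta>) \<le> \<epsilon> + 128 * M * (dist z \<zeta>)^2 / \<eta>^4"
proof -
  define C where "C = 128 * M * (dist z \<zeta>)^2 / (pi * \<eta>^4)"
  have "M \<ge> 0"
    using order_trans[OF norm_ge_zero M[of \<zeta>]] \<zeta> by simp
  then have "C \<ge> 0"
    using \<eta> by (simp add: C_def)
  have "berezin_kernel z w * norm (\<phi> w - \<phi> \<zeta>) \<le> berezin_kernel z w * \<epsilon> + C"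
    if w: "w \<in> ball 0 1" for w
  proof (cases "dist w \<zeta> < \<eta>")
    case True
    then have "berezin_kernel z w * norm (\<phi> w - \<phi> \<zeta>) \<le> berezin_kernel z w * \<epsilon>"
      using osc[OF w] berezin_kernel_nonneg by (intro mult_left_mono)
    with \<open>C \<ge> 0\<close> show ?thesis
      by linarith
  next
    case False
    then have "berezin_kernel z w \<le> 64 * (dist z \<zeta>)^2 / (pi * \<eta>^4)"
      using z w \<zeta> \<eta> by (intro berezin_kernel_bound_away) auto
    moreover have "norm (\<phi> w - \<phi> \<zeta>) \<le> 2 * M"
      using M[of w] M[of \<zeta>] w \<zeta> norm_triangle_ineq4[of "\<phi> w" "\<phi> \<zeta>"] by simp
    ultimately have "berezin_kernel z w * norm (\<phi> w - \<phi> \<zeta>) \<le>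
        64 * (dist z \<zeta>)^2 / (pi * \<eta>^4) * (2 * M)"
      using berezin_kernel_nonneg[of z w] by (intro mult_mono) auto
    also have "\<dots> = C"
      by (simp add: C_def)
    finally show ?thesis
      using berezin_kernel_nonneg[of z w] \<open>\<epsilon> \<ge> 0\<close> by (simp add: add_increasing)
  qed
  then have "norm (berezin \<phi> z - \<phi> \<zeta>) \<le> \<epsilon> + C * pi"
    using z by (intro norm_berezin_diff_le \<phi>) auto
  then show ?thesis
    by (simp add: C_def)
qed

lemma berezin_tendsto_boundary:
  assumes \<phi>: "continuous_on (cball 0 1) \<phi>" and \<zeta>: "norm \<zeta> = 1"
  shows "(berezin \<phi> \<longlongrightarrow> \<phi> \<zeta>) (at \<zeta> within ball 0 1)"
  unfolding Lim_within
proof (intro allI impI)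
  fix e :: real assume "e > 0"
  obtain M where "M > 0" and M: "\<And>w. w \<in> cball 0 1 \<Longrightarrow> norm (\<phi> w) \<le> M"
    using continuous_on_compact_bound_pos[OF compact_cball \<phi>] by blast
  obtain \<eta> where "\<eta> > 0"
    and \<eta>: "\<And>w. w \<in> cball 0 1 \<Longrightarrow> dist w \<zeta> < \<eta> \<Longrightarrow> dist (\<phi> w) (\<phi> \<zeta>) < e/2"
    using \<phi> \<zeta> \<open>e > 0\<close> unfolding continuous_on_iff by (metis half_gt_zero mem_cball_0 order_refl)
  define \<delta> where "\<delta> = min (\<eta>/2) (min 1 (e * \<eta>^4 / (256 * M)))"
  have "dist (berezin \<phi> z) (\<phi> \<zeta>) < e" if z: "z \<in> ball 0 1" "dist z \<zeta> < \<delta>" for z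
  proof -
    define t where "t = dist z \<zeta>"
    have "norm (berezin \<phi> z - \<phi> \<zeta>) \<le> e/2 + 128 * M * t^2 / \<eta>^4"
      unfolding t_def using z \<zeta> \<phi> M \<open>\<eta> > 0\<close> \<open>e > 0\<close> \<eta>
      by (intro norm_berezin_sub_boundary_le) (auto simp: \<delta>_def dist_norm less_imp_le)
    also have "128 * M * t^2 / \<eta>^4 < e/2"
    proof -
      have "t^2 \<le> t" "t < e * \<eta>^4 / (256 * M)"
        using z by (auto simp: t_def \<delta>_def power2_eq_square mult_left_le_one_le)
      then have "128 * M * t^2 < e/2 * \<eta>^4"
        using \<open>M > 0\<close> \<open>e > 0\<close> \<open>\<eta> > 0\<close> by (simp add: field_simps) (smt (verit) mult_left_mono)
      then show ?thesis
        using \<open>\<eta> > 0\<close> by (simp add: field_simps)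
    qed
    finally show ?thesis
      by (simp add: dist_norm)
  qed
  moreover have "\<delta> > 0"
    using \<open>e > 0\<close> \<open>\<eta> > 0\<close> \<open>M > 0\<close> by (simp add: \<delta>_def)
  ultimately show "\<exists>\<delta>>0. \<forall>z\<in>ball 0 1. 0 < dist z \<zeta> \<and> dist z \<zeta> < \<delta> \<longrightarrow>
      dist (berezin \<phi> z) (\<phi> \<zeta>) < e"
    by blast
qed

lemma has_integral_pos_if_bounded_below_on_ball:
  fixes f :: "'a::euclidean_space \<Rightarrow> real"
  assumes f: "(f has_integral I) S" and nonneg: "\<And>x. x \<in> S \<Longrightarrow> 0 \<le> f x"
    and ball: "ball x0 \<rho> \<subseteq> S" "\<rho> > 0"
    and below: "c > 0" "\<And>x. x \<in> ball x0 \<rho> \<Longrightarrow> c \<le> f x"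
  shows "I > 0"
proof -
  have "((\<lambda>x. c) has_integral c * measure lborel (ball x0 \<rho>)) (ball x0 \<rho>)"
    using has_integral_mult_right[OF has_integral_measure_lborel, of "ball x0 \<rho>" c]
      emeasure_bounded_finite[of "ball x0 \<rho>"] by simp
  then have "((\<lambda>x. if x \<in> ball x0 \<rho> then c else 0) has_integral
      c * measure lborel (ball x0 \<rho>)) (ball x0 \<rho>)"
    by (rule has_integral_eq[rotated]) simp
  then have "((\<lambda>x. if x \<in> ball x0 \<rho> then c else 0) has_integral
      c * measure lborel (ball x0 \<rho>)) S"
    by (rule has_integral_on_superset[OF _ _ ball(1)]) simp
  then have "c * measure lborel (ball x0 \<rho>) \<le> I"
    by (rule has_integral_le[OF _ f]) (simp add: below nonneg)
  moreover have "c * measure lborel (ball x0 \<rho>) > 0"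
    using content_ball_pos[OF ball(2)] below(1) by simp
  ultimately show ?thesis
    by linarith
qed

lemma Re_berezin_pos:
  assumes \<phi>: "continuous_on (cball 0 1) \<phi>"
    and Re_nonneg: "\<And>w. w \<in> ball 0 1 \<Longrightarrow> Re (\<phi> w) \<ge> 0"
    and w0: "w0 \<in> ball 0 1" "Re (\<phi> w0) > 0" and z: "z \<in> ball 0 1"
  shows "Re (berezin \<phi> z) > 0"
proof -
  define a where "a = Re (\<phi> w0)"
  obtain r where "r > 0"
    and r: "\<And>w. w \<in> cball 0 1 \<Longrightarrow> dist w w0 < r \<Longrightarrow> dist (\<phi> w) (\<phi> w0) < a/2"
    using \<phi> w0 unfolding continuous_on_iff a_def by (metis half_gt_zero ball_subset_cball subsetD)
  define \<rho> where "\<rho> = min r (1 - norm w0)"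
  have ball_\<rho>: "ball w0 \<rho> \<subseteq> ball 0 1"
    by (simp add: ball_subset_ball_iff \<rho>_def min_def)
  have "(cmod z)^2 < 1"
    using z by (simp add: abs_square_less_1)
  show ?thesis
  proof (rule has_integral_pos_if_bounded_below_on_ball[OF _ _ ball_\<rho>])
    show "((\<lambda>w. berezin_kernel z w * Re (\<phi> w)) has_integral Re (berezin \<phi> z)) (ball 0 1)"
      using has_integral_linear[OF has_integral_berezin[OF _ \<phi>] bounded_linear_Re] z
      by (simp add: o_def)
    show "0 \<le> berezin_kernel z w * Re (\<phi> w)" if "w \<in> ball 0 1" for w
      using Re_nonneg[OF that] berezin_kernel_nonneg by simp
    show "\<rho> > 0"
      using \<open>r > 0\<close> w0 by (simp add: \<rho>_def)
    show "(1 - (cmod z)^2)^2 / (16 * pi) * (a/2) > 0"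
      using w0 \<open>(cmod z)^2 < 1\<close> by (simp add: a_def)
    show "(1 - (cmod z)^2)^2 / (16 * pi) * (a/2) \<le> berezin_kernel z w * Re (\<phi> w)"
      if w: "w \<in> ball w0 \<rho>" for w
    proof (rule mult_mono)
      have "w \<in> ball 0 1"
        using w ball_\<rho> by blast
      then show "(1 - (cmod z)^2)^2 / (16 * pi) \<le> berezin_kernel z w"
        using z by (intro berezin_kernel_lower_bound) auto
      have "\<bar>Re (\<phi> w) - a\<bar> < a/2"
        using r[of w] w \<open>w \<in> ball 0 1\<close> abs_Re_le_cmod[of "\<phi> w - \<phi> w0"]
        by (simp add: \<rho>_def dist_norm norm_minus_commute a_def)
      then show "a/2 \<le> Re (\<phi> w)"
        by linarith
    qed (use w0 berezin_kernel_nonneg in \<open>auto simp: a_def\<close>)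
  qed
qed

lemma continuous_on_closure_extension:
  fixes F G :: "'a::t2_space \<Rightarrow> 'b::topological_space"
  assumes U: "open U" and F: "continuous_on U F" and G: "continuous_on (closure U) G"
    and lim: "\<And>x. x \<in> frontier U \<Longrightarrow> (F \<longlongrightarrow> G x) (at x within U)"
  shows "continuous_on (closure U) (\<lambda>x. if x \<in> U then F x else G x)"
    (is "continuous_on _ ?H")
proof (rule continuous_on_eq_continuous_within[THEN iffD2], intro ballI)
  fix x assume x: "x \<in> closure U"
  have "continuous_on U ?H"
    using F by (rule continuous_on_eq) simp
  then have "continuous (at x within closure U) ?H" if "x \<in> U"
    using U that continuous_on_eq_continuous_at continuous_at_imp_continuous_within by blast
  moreover have "continuous (at x within closure U) ?H" if "x \<in> frontier U"
  proof -
    have disjoint: "frontier U \<inter> U = {}"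
      using U frontier_disjoint_eq by blast
    then have "x \<notin> U"
      using that by blast
    have "(?H \<longlongrightarrow> G x) (at x within U)"
      by (rule Lim_transform_eventually[OF lim[OF that]]) (simp add: eventually_at_filter)
    moreover have "(G \<longlongrightarrow> G x) (at x within frontier U)"
      using G x closure_Un_frontier[of U] unfolding continuous_on_def by (blast intro: tendsto_within_subset)
    then have "(?H \<longlongrightarrow> G x) (at x within frontier U)"
      by (rule Lim_transform_eventually)
        (use disjoint in \<open>auto simp: eventually_at_filter intro!: always_eventually\<close>)
    ultimately show ?thesis
      unfolding continuous_within using \<open>x \<notin> U\<close> by (simp add: closure_Un_frontier Lim_within_Un)
  qed
  ultimately show "continuous (at x within closure U) ?H"
    using x closure_Un_frontier by blast
qed

lemma continuous_on_compact_norm_bounded_below: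
  fixes f :: "'a::topological_space \<Rightarrow> 'b::real_normed_vector"
  assumes "compact K" "continuous_on K f" "\<And>x. x \<in> K \<Longrightarrow> f x \<noteq> 0"
  shows "\<exists>c>0. \<forall>x\<in>K. c \<le> norm (f x)"
proof (cases "K = {}")
  case False
  have "continuous_on K (\<lambda>x. norm (f x))"
    using assms(2) by (rule continuous_on_norm)
  then obtain x0 where "x0 \<in> K" "\<And>x. x \<in> K \<Longrightarrow> norm (f x0) \<le> norm (f x)"
    using continuous_attains_inf[OF assms(1) False] by blast
  then show ?thesis
    using assms(3) by (intro exI[of _ "norm (f x0)"]) auto
qed (simp add: gt_ex)

lemma Re_pos_if_Im_sq_le_Re:
  assumes "\<bar>Im w\<bar>^2 \<le> Re w" "w \<noteq> 0"
  shows "Re w > 0"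
proof (rule ccontr)
  assume "\<not> Re w > 0"
  then have "Re w = 0"
    using assms(1) zero_le_power2[of "\<bar>Im w\<bar>"] by linarith
  moreover have "Im w = 0"
    using assms(1) \<open>Re w = 0\<close> by simp
  ultimately show False
    using assms(2) by (simp add: complex_eq_iff)
qed

lemma berezin_nonzero:
  assumes \<phi>: "continuous_on (cball 0 1) \<phi>"
    and parabola: "\<forall>w\<in>ball 0 1. Re (\<phi> w) \<ge> \<bar>Im (\<phi> w)\<bar>^2"
    and \<zeta>: "\<zeta> \<in> cball 0 1" "\<phi> \<zeta> \<noteq> 0" and z: "z \<in> ball 0 1"
  shows "berezin \<phi> z \<noteq> 0"
proof -
  have "\<exists>w0\<in>ball 0 1. \<phi> w0 \<noteq> 0"
  proof (rule ccontr)
    assume "\<not> (\<exists>w0\<in>ball 0 1. \<phi> w0 \<noteq> 0)"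
    moreover have "closure (ball (0::complex) 1) = cball 0 1"
      by simp
    ultimately have "\<phi> \<zeta> = 0"
      using continuous_constant_on_closure[of "ball 0 1" \<phi> 0 \<zeta>] \<phi> \<zeta>(1) by metis
    with \<zeta>(2) show False ..
  qed
  then obtain w0 where w0: "w0 \<in> ball 0 1" "\<phi> w0 \<noteq> 0"
    by blast
  have "Re (\<phi> w) \<ge> 0" if "w \<in> ball 0 1" for w
    using order_trans[OF zero_le_power2 parabola[rule_format, OF that]] .
  moreover have "Re (\<phi> w0) > 0"
    using parabola w0 by (simp add: Re_pos_if_Im_sq_le_Re)
  ultimately have "Re (berezin \<phi> z) > 0"
    by (rule Re_berezin_pos[OF \<phi> _ w0(1) _ z])
  then show ?thesis
    by auto
qed

theorem lemma5p5:
  fixes \<phi> :: "complex \<Rightarrow> complex"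
  assumes "continuous_on (cball 0 1) \<phi>"
    and "\<forall>z\<in>ball 0 1. Re (\<phi> z) \<ge> (\<bar>Im (\<phi> z)\<bar>)^2"
  shows "\<exists>F. continuous_on (cball 0 1) F \<and> (\<forall>z\<in>ball 0 1. F z = berezin \<phi> z) \<and>
           ((\<exists>\<delta>>0. \<forall>z\<in>sphere 0 1. \<delta> \<le> cmod (F z)) \<longrightarrow>
              (\<exists>c>0. \<forall>z\<in>ball 0 1. c \<le> cmod (berezin \<phi> z)))"
proof -
  define F where "F z = (if z \<in> ball 0 1 then berezin \<phi> z else \<phi> z)" for z
  have continuous: "continuous_on (cball 0 1) F"
    using continuous_on_closure_extension[OF open_ball continuous_on_berezin[OF assms(1)]]
      assms(1) berezin_tendsto_boundary[OF assms(1)]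
    by (simp add: F_def[abs_def])
  show ?thesis
  proof (intro exI[of _ F] conjI ballI impI continuous)
    show "F z = berezin \<phi> z" if "z \<in> ball 0 1" for z
      using that by (simp add: F_def)
    assume "\<exists>\<delta>>0. \<forall>z\<in>sphere 0 1. \<delta> \<le> cmod (F z)"
    then have sphere: "F \<zeta> \<noteq> 0" if "\<zeta> \<in> sphere 0 1" for \<zeta>
      using that by force
    then have "\<phi> 1 \<noteq> 0"
      by (simp add: F_def)
    then have "F z \<noteq> 0" if "z \<in> cball 0 1" for z
      using berezin_nonzero[OF assms, of 1] sphere[of z] that by (auto simp: F_def)
    then obtain c where "c > 0" and c: "\<And>z. z \<in> cball 0 1 \<Longrightarrow> c \<le> cmod (F z)"
      using continuous_on_compact_norm_bounded_below[OF compact_cball continuous] by blast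
    have "c \<le> cmod (berezin \<phi> z)" if "z \<in> ball 0 1" for z
      using c[of z] that by (simp add: F_def)
    with \<open>c > 0\<close> show "\<exists>c>0. \<forall>z\<in>ball 0 1. c \<le> cmod (berezin \<phi> z)"
      by blast
  qed
qed

end
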